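(* Consider problem (P8) in variables $\boldsymbol\phi\in\mathbb C^N$, $\boldsymbol\psi\in\mathbb C^N$, $\alpha\in\mathbb R$: $$\min\ \alpha\quad\text{s.t.}\quad g_k(\boldsymbol\phi,\alpha):=\boldsymbol\phi^H\boldsymbol Q_k\boldsymbol\phi+2\,\mathrm{Re}\{\boldsymbol q_k^H\boldsymbol\phi\}+d_k-\alpha\le 0\ (k=1,\dots,K),\ \ \boldsymbol\phi=\boldsymbol\psi,\ \ |\psi_n|=1,\ \ |\phi_n|\le 1\ (n=1,\dots,N),$$ where $\boldsymbol Q_k\in\mathbb C^{N\times N}$ are Hermitian positive semidefinite, $\boldsymbol q_k\in\mathbb C^N$, $d_k\in\mathbb R$. Run the PDD algorithm described in the context, and assume that for every outer index $k$ the point $(\boldsymbol\phi^{(k)},\boldsymbol\psi^{(k)},\alpha^{(k)})$ is a limit point of the inner sequence $(\boldsymbol\phi^{(k,t)},\boldsymbol\psi^{(k,t)},\alpha^{(k,t)})_{t\ge1}$. If the sequence $\boldsymbol\mu^{(k)}:=\frac{1}{\rho^{(k)}}(\boldsymbol\phi^{(k)}-\boldsymbol\psi^{(k)})+\boldsymbol\lambda^{(k)}$ is bounded, then every limit point of $\{(\boldsymbol\phi^{(k)},\boldsymbol\psi^{(k)},\alpha^{(k)})\}_k$ is a KKT point of (P8), i.e. there exist multipliers $\bar{\boldsymbol\nu}\in\mathbb R^K_{\ge0}$ (for $g_k\le0$), $\bar{\boldsymbol\varpi}\in\mathbb R^N_{\ge0}$ (for $|\phi_n|\le1$), $\bar{\boldsymbol\mu}\in\mathbb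 C^N$ (for $\boldsymbol\phi=\boldsymbol\psi$) and $\bar{\boldsymbol\xi}\in\mathbb R^N$ (for $|\psi_n|=1$) satisfying the KKT conditions of (P8) (stationarity in the Wirtinger sense with respect to $\boldsymbol\phi^*,\boldsymbol\psi^*,\alpha$, primal feasibility, dual feasibility and complementary slackness).
   Context: PDD algorithm for (P8). Fix a constant $c\in(0,1)$ and a sequence $\eta_k\downarrow 0$. Initialize $\boldsymbol\phi^{(0)},\boldsymbol\psi^{(0)},\alpha^{(0)},\boldsymbol\lambda^{(0)}\in\mathbb C^N$ and $\rho^{(0)}>0$. For outer iteration $k$ with current $(\boldsymbol\lambda^{(k)},\rho^{(k)})$, define the augmented Lagrangian $h(\boldsymbol\phi,\boldsymbol\psi,\alpha)=\alpha+\frac{1}{2\rho^{(k)}}\|\boldsymbol\phi-\boldsymbol\psi\|_2^2+\mathrm{Re}\{\boldsymbol\lambda^{(k)H}(\boldsymbol\phi-\boldsymbol\psi)\}$. The inner loop starts from the previous outer iterate and alternates, for $t=0,1,2,\dots$: (i) $(\boldsymbol\phi^{(k,t+1)},\alpha^{(k,t+1)})$ is an optimal solution of the convex problem $\min_{\boldsymbol\phi,\alpha} h(\boldsymbol\phi,\boldsymbol\psi^{(k,t)},\alpha)$ subject to $g_j(\boldsymbol\phi,\alpha)\le0$ for all $j$ and $|\phi_n|\le 1$ for all $n$; (ii) $\boldsymbol\psi^{(k,t+1)}=\exp\big(j\angle(\boldsymbol\phi^{(k,t+1)}+\rho^{(k)}\boldsymbol\lambda^{(k)})\big)$ (entrywise),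 which minimizes $h(\boldsymbol\phi^{(k,t+1)},\cdot,\alpha^{(k,t+1)})$ over $\{\boldsymbol\psi:|\psi_n|=1\ \forall n\}$. The outer iterate $(\boldsymbol\phi^{(k)},\boldsymbol\psi^{(k)},\alpha^{(k)})$ is a limit point of the inner sequence. Outer update: if $\|\boldsymbol\phi^{(k)}-\boldsymbol\psi^{(k)}\|_\infty\le\eta_k$, set $\boldsymbol\lambda^{(k+1)}=\boldsymbol\lambda^{(k)}+\frac{1}{\rho^{(k)}}(\boldsymbol\phi^{(k)}-\boldsymbol\psi^{(k)})$, $\rho^{(k+1)}=\rho^{(k)}$; otherwise set $\boldsymbol\lambda^{(k+1)}=\boldsymbol\lambda^{(k)}$, $\rho^{(k+1)}=c\,\rho^{(k)}$. *)

theory Defs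
  imports "HOL-Analysis.Analysis"
begin

text \<open>Vectors in C^N are modelled as complex^'n (index type 'n finite, N = CARD('n));
  the K constraints g_k are indexed by a finite type 'm (K = CARD('m)).\<close>

definition herm_form :: "complex^'n^'n \<Rightarrow> complex^'n \<Rightarrow> complex" where
  "herm_form Q x = (\<Sum>i\<in>UNIV. \<Sum>j\<in>UNIV. cnj (x$i) * Q$i$j * x$j)"

definition cinner :: "complex^'n \<Rightarrow> complex^'n \<Rightarrow> complex" where
  "cinner a b = (\<Sum>i\<in>UNIV. cnj (a$i) * b$i)"

definition hermitian_psd :: "complex^'n^'n \<Rightarrow> bool" where
  "hermitian_psd Q \<longleftrightarrow> (\<forall>i j. Q$i$j = cnj (Q$j$i)) \<and> (\<forall>x. 0 \<le> Re (herm_form Q x))"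

text \<open>g_k(phi,alpha) = phi^H Q_k phi + 2 Re(q_k^H phi) + d_k - alpha
  (phi^H Q phi is real for Hermitian Q; we take its real part)\<close>
definition gP8 :: "complex^'n^'n \<Rightarrow> complex^'n \<Rightarrow> real \<Rightarrow> complex^'n \<Rightarrow> real \<Rightarrow> real" where
  "gP8 Q q d phi a = Re (herm_form Q phi) + 2 * Re (cinner q phi) + d - a"

definition sub_feasible ::
  "('m \<Rightarrow> complex^'n^'n) \<Rightarrow> ('m \<Rightarrow> complex^'n) \<Rightarrow> ('m \<Rightarrow> real) \<Rightarrow> complex^'n \<Rightarrow> real \<Rightarrow> bool" where
  "sub_feasible Q q d phi a \<longleftrightarrow> (\<forall>k. gP8 (Q k) (q k) (d k) phi a \<le> 0) \<and> (\<forall>n. cmod (phi$n) \<le> 1)"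

definition aug_lag :: "complex^'n \<Rightarrow> real \<Rightarrow> complex^'n \<Rightarrow> complex^'n \<Rightarrow> real \<Rightarrow> real" where
  "aug_lag lam rho phi psi a = a + 1 / (2 * rho) * (norm (phi - psi))^2 + Re (cinner lam (phi - psi))"

definition linf :: "complex^'n \<Rightarrow> real" where
  "linf v = Max (range (\<lambda>i. cmod (v$i)))"

definition seq_limit_point :: "'a::topological_space \<Rightarrow> (nat \<Rightarrow> 'a) \<Rightarrow> bool" where
  "seq_limit_point x s \<longleftrightarrow> (\<exists>r. strict_mono r \<and> (s \<circ> r) \<longlonglongrightarrow> x)"

text \<open>KKT conditions of (P8), with Lagrangian
  L = alpha + sum_k nu_k g_k(phi,alpha) + sum_n varpi_n (|phi_n|^2 - 1)
      + Re(mu^H (phi - psi)) + sum_n xi_n (|psi_n|^2 - 1);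
  Wirtinger stationarity dL/dphi^* = 0, dL/dpsi^* = 0, dL/dalpha = 0 written out.\<close>
definition KKT_P8 ::
  "('m \<Rightarrow> complex^'n^'n) \<Rightarrow> ('m \<Rightarrow> complex^'n) \<Rightarrow> ('m \<Rightarrow> real) \<Rightarrow> complex^'n \<Rightarrow> complex^'n \<Rightarrow> real \<Rightarrow> bool" where
  "KKT_P8 Q q d phi psi a \<longleftrightarrow>
    (\<exists>(nu::'m \<Rightarrow> real) (varpi::'n \<Rightarrow> real) (mu::complex^'n) (xi::'n \<Rightarrow> real).
      \<comment> \<open>stationarity w.r.t. phi^*\<close>
      (\<forall>n. (\<Sum>k\<in>UNIV. complex_of_real (nu k) * ((Q k *v phi)$n + (q k)$n))
            + complex_of_real (varpi n) * phi$n + mu$n / 2 = 0) \<and>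
      \<comment> \<open>stationarity w.r.t. psi^*\<close>
      (\<forall>n. - mu$n / 2 + complex_of_real (xi n) * psi$n = 0) \<and>
      \<comment> \<open>stationarity w.r.t. alpha\<close>
      1 - (\<Sum>k\<in>UNIV. nu k) = 0 \<and>
      \<comment> \<open>primal feasibility\<close>
      (\<forall>k. gP8 (Q k) (q k) (d k) phi a \<le> 0) \<and> phi = psi \<and>
      (\<forall>n. cmod (psi$n) = 1) \<and> (\<forall>n. cmod (phi$n) \<le> 1) \<and>
      \<comment> \<open>dual feasibility\<close>
      (\<forall>k. 0 \<le> nu k) \<and> (\<forall>n. 0 \<le> varpi n) \<and>
      \<comment> \<open>complementary slackness\<close>
      (\<forall>k. nu k * gP8 (Q k) (q k) (d k) phi a = 0) \<and>
      (\<forall>n. varpi n * ((cmod (phi$n))^2 - 1) = 0))"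

end

theory Submission
  imports Defs
begin

text \<open>Each outer iterate minimises the augmented Lagrangian over the convex \<open>\<phi>\<close>-feasible
  set for its own \<open>\<psi>\<close>, and its \<open>\<psi>\<close> is the phase of \<open>\<phi> + \<rho>\<lambda>\<close>. Hence it satisfies every
  KKT condition of (P8) except \<open>\<phi> = \<psi>\<close>, with \<open>\<mu> = (\<phi> - \<psi>)/\<rho> + \<lambda>\<close> as multiplier of the
  consensus constraint, and these conditions are closed.
  Boundedness of \<open>\<mu>\<close> makes \<open>\<lambda>\<close> bounded (it is either kept or reset to \<open>\<mu>\<close>), so either
  \<open>\<rho> \<rightarrow> 0\<close> and \<open>\<phi> - \<psi> = \<rho>(\<mu> - \<lambda>) \<rightarrow> 0\<close>, or \<open>\<rho>\<close> is eventually constant, the test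
  \<open>\<parallel>\<phi> - \<psi>\<parallel>\<^sub>\<infinity> \<le> \<eta>\<close> eventually always passes and \<open>\<phi> - \<psi> \<rightarrow> 0\<close> again. Along a subsequence
  \<open>\<mu>\<close> converges, so a limit point satisfies all conditions together with \<open>\<phi> = \<psi>\<close>. Finally
  Slater's condition for the convex \<open>\<phi>\<close>-subproblem (\<open>\<phi> = 0\<close>, \<open>\<alpha>\<close> large) turns the variational
  inequality into Lagrange multipliers.\<close>

section \<open>Functions that are quadratic along lines\<close>

lemma first_order_coeff_nonneg:
  fixes D E :: real
  assumes "\<And>t. 0 < t \<Longrightarrow> t \<le> 1 \<Longrightarrow> 0 \<le> t * D + t\<^sup>2 * E"
  shows "0 \<le> D"
proof (rule tendsto_lowerbound)
  show "((\<lambda>t. D + t * E) \<longlongrightarrow> D) (at_right 0)"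
    by (auto intro!: tendsto_eq_intros)
  have "\<forall>\<^sub>F t in at_right (0::real). t \<in> {0<..<1}"
    by (rule eventually_at_right_real) simp
  then show "\<forall>\<^sub>F t in at_right 0. 0 \<le> D + t * E"
  proof (rule eventually_mono)
    fix t :: real
    assume t: "t \<in> {0<..<1}"
    with assms[of t] have "0 \<le> t * (D + t * E)"
      by (simp add: power2_eq_square algebra_simps)
    with t show "0 \<le> D + t * E"
      by (simp add: zero_le_mult_iff)
  qed
qed simp

lemma first_order_coeff_zero:
  fixes D E :: real
  assumes "\<And>t. 0 \<le> t * D + t\<^sup>2 * E"
  shows "D = 0"
proof -
  have "0 \<le> D"
    by (rule first_order_coeff_nonneg) (use assms in auto)
  moreover have "0 \<le> - D"
    by (rule first_order_coeff_nonneg[of _ E]) (use assms[of "- _"] in auto)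
  ultimately show ?thesis
    by simp
qed

lemma le_of_forall_pos_le_add_mult:
  fixes x y C :: real
  assumes "\<And>e. 0 < e \<Longrightarrow> x \<le> y + e * C"
  shows "x \<le> y"
proof (rule tendsto_lowerbound)
  show "((\<lambda>e. y + e * C) \<longlongrightarrow> y) (at_right 0)"
    by (auto intro!: tendsto_eq_intros)
  show "\<forall>\<^sub>F e in at_right 0. x \<le> y + e * C"
    using eventually_at_right_less by (rule eventually_mono) (rule assms)
qed simp

lemma nonneg_of_forall_nonneg_le_add_mult:
  fixes a b c :: real
  assumes "\<And>r. 0 \<le> r \<Longrightarrow> b \<le> c + a * r"
  shows "0 \<le> a"
proof (rule ccontr)
  assume "\<not> 0 \<le> a"
  then have a: "a < 0"
    by simp
  define r where "r = \<bar>c - b\<bar> / (- a) + 1"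
  have "0 \<le> r"
    using a by (simp add: r_def divide_nonneg_pos)
  moreover have "a * r = - \<bar>c - b\<bar> + a"
    using a by (simp add: r_def field_simps)
  ultimately show False
    using assms[of r] a by linarith
qed

lemma sum_nonpos_terms_eq_0:
  fixes l g :: "'k::finite \<Rightarrow> real"
  assumes "\<And>i. 0 \<le> l i" "\<And>i. g i \<le> 0" "0 \<le> (\<Sum>i\<in>UNIV. l i * g i)"
  shows "l i * g i = 0"
proof -
  have nonpos: "l j * g j \<le> 0" for j
    using assms by (simp add: mult_nonneg_nonpos)
  then have "(\<Sum>i\<in>UNIV. l i * g i) = 0"
    using assms(3) sum_nonpos[of UNIV "\<lambda>i. l i * g i"] by simp
  with nonpos show ?thesis
    using sum_nonneg_eq_0_iff[of UNIV "\<lambda>i. - (l i * g i)"] by (simp add: sum_negf)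
qed

lemma convex_on_quadratic_expansion:
  fixes f :: "'a::real_vector \<Rightarrow> real"
  assumes f: "\<And>x w t. f (x + t *\<^sub>R w) = f x + t * D x w + t\<^sup>2 * E w"
    and E: "\<And>w. 0 \<le> E w"
  shows "convex_on UNIV f"
  unfolding convex_on_def
proof (intro conjI convex_UNIV ballI allI impI)
  fix x y :: 'a and u v :: real
  assume u: "0 \<le> u" and v: "0 \<le> v" and uv: "u + v = 1"
  have u_eq: "u = 1 - v"
    using uv by simp
  have "v * (v * E (y - x)) \<le> v * E (y - x)"
    by (rule mult_left_le_one_le) (use u v uv E[of "y - x"] in auto)
  then have "v\<^sup>2 * E (y - x) \<le> v * E (y - x)"
    by (simp add: power2_eq_square mult.assoc)
  moreover have "u *\<^sub>R x + v *\<^sub>R y = x + v *\<^sub>R (y - x)"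
    by (simp add: u_eq scaleR_diff_left scaleR_diff_right)
  then have "f (u *\<^sub>R x + v *\<^sub>R y) = f x + v * D x (y - x) + v\<^sup>2 * E (y - x)"
    by (simp only: f)
  moreover have "u * f x + v * f y = f x + v * D x (y - x) + v * E (y - x)"
    using f[of x 1 "y - x"] by (simp add: u_eq algebra_simps)
  ultimately show "f (u *\<^sub>R x + v *\<^sub>R y) \<le> u * f x + v * f y"
    by linarith
qed

lemma first_order_of_min_on_convex:
  fixes f :: "'a::real_vector \<Rightarrow> real"
  assumes f: "\<And>x w t. f (x + t *\<^sub>R w) = f x + t * D x w + t\<^sup>2 * E w"
    and C: "convex C" "x0 \<in> C" "y \<in> C"
    and min: "\<And>x. x \<in> C \<Longrightarrow> f x0 \<le> f x"
  shows "0 \<le> D x0 (y - x0)"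
proof (rule first_order_coeff_nonneg[of _ "E (y - x0)"])
  fix t :: real
  assume "0 < t" "t \<le> 1"
  then have "(1 - t) *\<^sub>R x0 + t *\<^sub>R y \<in> C"
    using C by (intro convexD_alt) auto
  moreover have "(1 - t) *\<^sub>R x0 + t *\<^sub>R y = x0 + t *\<^sub>R (y - x0)"
    by (simp add: algebra_simps)
  ultimately have "f x0 \<le> f (x0 + t *\<^sub>R (y - x0))"
    by (metis min)
  then show "0 \<le> t * D x0 (y - x0) + t\<^sup>2 * E (y - x0)"
    by (simp add: f)
qed

section \<open>Lagrange multipliers of convex programs under Slater's condition\<close>

lemma convex_constraint_epigraph:
  fixes f :: "'a::real_vector \<Rightarrow> real" and g :: "'k::finite \<Rightarrow> 'a \<Rightarrow> real"
  assumes f: "convex_on UNIV f" and g: "\<And>i. convex_on UNIV (g i)"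
  shows "convex {(t, s::real^'k). \<exists>x. f x \<le> t \<and> (\<forall>i. g i x \<le> s$i)}"
proof (rule convexI)
  fix p p' :: "real \<times> (real^'k)" and u v :: real
  assume "p \<in> {(t, s). \<exists>x. f x \<le> t \<and> (\<forall>i. g i x \<le> s$i)}"
    and "p' \<in> {(t, s). \<exists>x. f x \<le> t \<and> (\<forall>i. g i x \<le> s$i)}"
    and uv: "0 \<le> u" "0 \<le> v" "u + v = 1"
  then obtain t s x t' s' x' where p: "p = (t, s)" "p' = (t', s')"
    and x: "f x \<le> t" "\<forall>i. g i x \<le> s$i" and x': "f x' \<le> t'" "\<forall>i. g i x' \<le> s'$i"
    by auto
  have "f (u *\<^sub>R x + v *\<^sub>R x') \<le> u * f x + v * f x'"
    using f uv by (simp add: convex_on_def)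
  also have "\<dots> \<le> u * t + v * t'"
    using x x' uv by (intro add_mono mult_left_mono) auto
  finally have "f (u *\<^sub>R x + v *\<^sub>R x') \<le> u * t + v * t'" .
  moreover have "g i (u *\<^sub>R x + v *\<^sub>R x') \<le> u * s$i + v * s'$i" for i
  proof -
    have "g i (u *\<^sub>R x + v *\<^sub>R x') \<le> u * g i x + v * g i x'"
      using g uv by (simp add: convex_on_def)
    also have "\<dots> \<le> u * s$i + v * s'$i"
      using x x' uv by (intro add_mono mult_left_mono) auto
    finally show ?thesis .
  qed
  ultimately show "u *\<^sub>R p + v *\<^sub>R p' \<in> {(t, s). \<exists>x. f x \<le> t \<and> (\<forall>i. g i x \<le> s$i)}"
    unfolding p by auto
qed

lemma convex_epigraph_separation:
  fixes f :: "'a::real_vector \<Rightarrow> real" and g :: "'k::finite \<Rightarrow> 'a \<Rightarrow> real"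
  assumes f: "convex_on UNIV f" and g: "\<And>i. convex_on UNIV (g i)"
    and opt: "\<And>x. (\<forall>i. g i x \<le> 0) \<Longrightarrow> f x0 \<le> f x"
  shows "\<exists>a0 (a::real^'k) b. (a0, a) \<noteq> 0 \<and>
    (\<forall>t s. t < f x0 \<longrightarrow> (\<forall>i. s$i < 0) \<longrightarrow> a0 * t + (\<Sum>i\<in>UNIV. a$i * s$i) \<le> b) \<and>
    (\<forall>x t s. f x \<le> t \<longrightarrow> (\<forall>i. g i x \<le> s$i) \<longrightarrow> b \<le> a0 * t + (\<Sum>i\<in>UNIV. a$i * s$i))"
proof -
  define A :: "(real \<times> (real^'k)) set" where "A = {(t, s). \<exists>x. f x \<le> t \<and> (\<forall>i. g i x \<le> s$i)}"
  define B :: "(real \<times> (real^'k)) set" where "B = {..<f x0} \<times> (\<Inter>i. {s. inner (axis i 1) s < 0})"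
  have B_iff: "(t, s) \<in> B \<longleftrightarrow> t < f x0 \<and> (\<forall>i. s$i < 0)" for t s
    by (simp add: B_def inner_axis')
  have "convex A"
    unfolding A_def using f g by (rule convex_constraint_epigraph)
  moreover have "convex B"
    unfolding B_def by (intro convex_Times convex_INT convex_halfspace_lt) (simp add: convex_real_interval)
  moreover have "B \<noteq> {}"
    using B_iff[of "f x0 - 1" "\<chi> i. -1"] by auto
  moreover have "(f x0, \<chi> i. g i x0) \<in> A"
    unfolding A_def by auto
  then have "A \<noteq> {}"
    by blast
  moreover have "B \<inter> A = {}"
  proof (rule ccontr)
    assume "B \<inter> A \<noteq> {}"
    then obtain t s x where "t < f x0" "\<forall>i. s$i < 0" "f x \<le> t" "\<forall>i. g i x \<le> s$i"
      unfolding A_def by (auto simp: B_iff)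
    then have "\<forall>i. g i x \<le> 0" "f x < f x0"
      by (meson less_imp_le order.trans, linarith)
    with opt show False
      by fastforce
  qed
  ultimately obtain c b where "c \<noteq> 0" and cB: "\<forall>p\<in>B. inner c p \<le> b" and cA: "\<forall>p\<in>A. b \<le> inner c p"
    by (metis separating_hyperplane_sets)
  obtain a0 a where c: "c = (a0, a)"
    by fastforce
  have inner_c: "inner c (t, s) = a0 * t + (\<Sum>i\<in>UNIV. a$i * s$i)" for t s
    by (simp add: c inner_vec_def)
  show ?thesis
  proof (intro exI conjI allI impI)
    show "(a0, a) \<noteq> 0"
      using \<open>c \<noteq> 0\<close> c by simp
    show "a0 * t + (\<Sum>i\<in>UNIV. a$i * s$i) \<le> b" if "t < f x0" "\<forall>i. s$i < 0" for t s
      using cB[rule_format, of "(t, s)"] that by (simp add: B_iff inner_c)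
    show "b \<le> a0 * t + (\<Sum>i\<in>UNIV. a$i * s$i)" if "f x \<le> t" "\<forall>i. g i x \<le> s$i" for x t s
      using cA[rule_format, of "(t, s)"] that by (auto simp: A_def inner_c)
  qed
qed

lemma convex_fritz_john_multipliers:
  fixes f :: "'a::real_vector \<Rightarrow> real" and g :: "'k::finite \<Rightarrow> 'a \<Rightarrow> real"
  assumes f: "convex_on UNIV f" and g: "\<And>i. convex_on UNIV (g i)"
    and opt: "\<And>x. (\<forall>i. g i x \<le> 0) \<Longrightarrow> f x0 \<le> f x"
  shows "\<exists>a0 a. (a0, a) \<noteq> 0 \<and> 0 \<le> a0 \<and> (\<forall>i. 0 \<le> a$i) \<and>
    (\<forall>x. a0 * f x0 \<le> a0 * f x + (\<Sum>i\<in>UNIV. a$i * g i x))"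
proof -
  obtain a0 and a :: "real^'k" and b where nonzero: "(a0, a) \<noteq> 0"
    and below: "\<forall>t s. t < f x0 \<longrightarrow> (\<forall>i. s$i < 0) \<longrightarrow> a0 * t + (\<Sum>i\<in>UNIV. a$i * s$i) \<le> b"
    and above: "\<forall>x t s. f x \<le> t \<longrightarrow> (\<forall>i. g i x \<le> s$i) \<longrightarrow> b \<le> a0 * t + (\<Sum>i\<in>UNIV. a$i * s$i)"
    using convex_epigraph_separation[of f g x0, OF f g opt] by blast
  have "b \<le> (a0 * f x0 + (\<Sum>i\<in>UNIV. a$i * g i x0)) + a0 * r" if "0 \<le> r" for r
    using that above[rule_format, of x0 "f x0 + r" "\<chi> i. g i x0"] by (simp add: algebra_simps)
  then have "0 \<le> a0"
    by (rule nonneg_of_forall_nonneg_le_add_mult)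
  moreover have "0 \<le> a$j" for j
  proof (rule nonneg_of_forall_nonneg_le_add_mult)
    fix r :: real
    assume "0 \<le> r"
    then have "b \<le> a0 * f x0 + (\<Sum>i\<in>UNIV. a$i * (\<chi> i. g i x0 + (if i = j then r else 0))$i)"
      by (intro above[rule_format, of x0]) auto
    also have "(\<Sum>i\<in>UNIV. a$i * (\<chi> i. g i x0 + (if i = j then r else 0))$i)
        = (\<Sum>i\<in>UNIV. a$i * g i x0) + a$j * r"
      by (simp add: distrib_left sum.distrib if_distrib[of "(*) _"] cong: if_cong)
    finally show "b \<le> (a0 * f x0 + (\<Sum>i\<in>UNIV. a$i * g i x0)) + a$j * r"
      by simp
  qed
  moreover have "a0 * f x0 \<le> b"
  proof (rule le_of_forall_pos_le_add_mult)
    fix e :: real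
    assume "0 < e"
    then have "a0 * (f x0 - e) + (\<Sum>i\<in>UNIV. a$i * (\<chi> i. - e)$i) \<le> b"
      by (intro below[rule_format]) auto
    then show "a0 * f x0 \<le> b + e * (a0 + (\<Sum>i\<in>UNIV. a$i))"
      by (simp add: algebra_simps sum_distrib_left sum_negf)
  qed
  then have "a0 * f x0 \<le> a0 * f x + (\<Sum>i\<in>UNIV. a$i * g i x)" for x
    using above[rule_format, of x "f x" "\<chi> i. g i x"] by simp
  ultimately show ?thesis
    using nonzero by blast
qed

lemma convex_slater_multipliers:
  fixes f :: "'a::real_vector \<Rightarrow> real" and g :: "'k::finite \<Rightarrow> 'a \<Rightarrow> real"
  assumes f: "convex_on UNIV f" and g: "\<And>i. convex_on UNIV (g i)"
    and feasible: "\<And>i. g i x0 \<le> 0"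
    and opt: "\<And>x. (\<forall>i. g i x \<le> 0) \<Longrightarrow> f x0 \<le> f x"
    and slater: "\<And>i. g i xs < 0"
  shows "\<exists>l. (\<forall>i. 0 \<le> l i) \<and> (\<forall>i. l i * g i x0 = 0) \<and>
    (\<forall>x. f x0 \<le> f x + (\<Sum>i\<in>UNIV. l i * g i x))"
proof -
  obtain a0 a where nonzero: "(a0, a) \<noteq> 0" and a0: "0 \<le> a0" and a: "\<forall>i. 0 \<le> a$i"
    and fj: "\<forall>x. a0 * f x0 \<le> a0 * f x + (\<Sum>i\<in>UNIV. a$i * g i x)"
    using convex_fritz_john_multipliers[of f g x0] f g opt by blast
  have "0 < a0"
  proof (rule ccontr)
    assume "\<not> 0 < a0"
    with a0 fj have "a0 = 0" "0 \<le> (\<Sum>i\<in>UNIV. a$i * g i xs)"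
      by auto
    then have "a$i * g i xs = 0" for i
      using a slater by (intro sum_nonpos_terms_eq_0) (auto simp: less_imp_le)
    then have "a = 0"
      using slater by (metis less_irrefl mult_eq_0_iff vec_eq_iff zero_index)
    with \<open>a0 = 0\<close> nonzero show False
      by (simp add: zero_prod_def)
  qed
  define l where "l i = a$i / a0" for i
  have l: "\<forall>i. 0 \<le> l i"
    using a \<open>0 < a0\<close> by (simp add: l_def)
  have dual: "f x0 \<le> f x + (\<Sum>i\<in>UNIV. l i * g i x)" for x
  proof -
    have "a0 * f x0 \<le> a0 * (f x + (\<Sum>i\<in>UNIV. l i * g i x))"
      using fj \<open>0 < a0\<close> by (simp add: l_def distrib_left sum_distrib_left)
    with \<open>0 < a0\<close> show ?thesis
      by simp
  qed
  have "l i * g i x0 = 0" for i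
    using l feasible dual[of x0] by (intro sum_nonpos_terms_eq_0) auto
  with l dual show ?thesis
    by blast
qed

lemma convex_slater_stationarity:
  fixes f :: "'a::real_vector \<Rightarrow> real" and g :: "'k::finite \<Rightarrow> 'a \<Rightarrow> real"
  assumes f: "\<And>x w t. f (x + t *\<^sub>R w) = f x + t * Df x w + t\<^sup>2 * Ef w"
    and Ef: "\<And>w. 0 \<le> Ef w"
    and g: "\<And>i x w t. g i (x + t *\<^sub>R w) = g i x + t * Dg i x w + t\<^sup>2 * Eg i w"
    and Eg: "\<And>i w. 0 \<le> Eg i w"
    and feasible: "\<And>i. g i x0 \<le> 0"
    and opt: "\<And>x. (\<forall>i. g i x \<le> 0) \<Longrightarrow> f x0 \<le> f x"
    and slater: "\<And>i. g i xs < 0"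
  shows "\<exists>l. (\<forall>i. 0 \<le> l i) \<and> (\<forall>i. l i * g i x0 = 0) \<and>
    (\<forall>w. Df x0 w + (\<Sum>i\<in>UNIV. l i * Dg i x0 w) = 0)"
proof -
  obtain l where l: "\<forall>i. 0 \<le> l i" and slack: "\<forall>i. l i * g i x0 = 0"
    and dual: "\<forall>x. f x0 \<le> f x + (\<Sum>i\<in>UNIV. l i * g i x)"
    using convex_slater_multipliers[of f g x0 xs] convex_on_quadratic_expansion[of f, OF f Ef]
      convex_on_quadratic_expansion[of "g _", OF g Eg] feasible opt slater
    by blast
  have "Df x0 w + (\<Sum>i\<in>UNIV. l i * Dg i x0 w) = 0" for w
  proof (rule first_order_coeff_zero[of _ "Ef w + (\<Sum>i\<in>UNIV. l i * Eg i w)"])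
    fix t :: real
    have "(\<Sum>i\<in>UNIV. l i * g i x0) = 0"
      using slack by (intro sum.neutral) blast
    moreover have "f (x0 + t *\<^sub>R w) + (\<Sum>i\<in>UNIV. l i * g i (x0 + t *\<^sub>R w))
      = f x0 + (\<Sum>i\<in>UNIV. l i * g i x0) + t * (Df x0 w + (\<Sum>i\<in>UNIV. l i * Dg i x0 w))
        + t\<^sup>2 * (Ef w + (\<Sum>i\<in>UNIV. l i * Eg i w))"
      by (simp only: f g) (simp add: algebra_simps sum.distrib sum_distrib_left)
    ultimately show "0 \<le> t * (Df x0 w + (\<Sum>i\<in>UNIV. l i * Dg i x0 w)) + t\<^sup>2 * (Ef w + (\<Sum>i\<in>UNIV. l i * Eg i w))"
      using dual[rule_format, of "x0 + t *\<^sub>R w"] by linarith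
  qed
  with l slack show ?thesis
    by blast
qed

section \<open>Hermitian forms and the constraints of (P8)\<close>

lemma inner_eq_Re_cinner: "inner u v = Re (cinner u v)"
  for u v :: "complex^'n"
  by (simp add: inner_vec_def cinner_def inner_complex_def Re_sum)

lemma Re_herm_form_eq_inner: "Re (herm_form Q x) = inner x (Q *v x)"
  by (simp add: inner_eq_Re_cinner herm_form_def cinner_def matrix_vector_mult_def
      sum_distrib_left mult.assoc)

lemma hermitian_inner_mult_commute:
  assumes "\<forall>i j. Q$i$j = cnj (Q$j$i)"
  shows "inner x (Q *v y) = inner y (Q *v x)"
proof -
  have Q: "cnj (Q$i$j) = Q$j$i" for i j
    using assms by (metis complex_cnj_cnj)
  have "cnj (cinner y (Q *v x)) = (\<Sum>i\<in>UNIV. \<Sum>j\<in>UNIV. y$i * Q$j$i * cnj (x$j))"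
    using Q by (simp add: cinner_def matrix_vector_mult_def sum_distrib_left mult.assoc)
  also have "\<dots> = (\<Sum>j\<in>UNIV. \<Sum>i\<in>UNIV. y$i * Q$j$i * cnj (x$j))"
    by (rule sum.swap)
  also have "\<dots> = cinner x (Q *v y)"
    by (simp add: cinner_def matrix_vector_mult_def sum_distrib_left mult.commute mult.left_commute)
  finally show ?thesis
    unfolding inner_eq_Re_cinner by (metis cnj.sel(1))
qed

lemma norm_add_scaleR_square:
  "(norm (x + t *\<^sub>R v))\<^sup>2 = (norm x)\<^sup>2 + t * (2 * inner x v) + t\<^sup>2 * (norm v)\<^sup>2"
  for x v :: "'a::real_inner"
  by (simp only: power2_norm_eq_inner)
    (simp add: inner_add_left inner_add_right inner_commute power2_eq_square algebra_simps)

lemma matrix_vector_mult_scaleR_complex: "Q *v (t *\<^sub>R v) = t *\<^sub>R (Q *v v)"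
  for v :: "complex^'n"
  by (simp add: vec_eq_iff matrix_vector_mult_def scaleR_sum_right)

lemma Re_herm_form_add_scaleR:
  assumes "\<forall>i j. Q$i$j = cnj (Q$j$i)"
  shows "Re (herm_form Q (x + t *\<^sub>R v))
    = Re (herm_form Q x) + t * (2 * inner v (Q *v x)) + t\<^sup>2 * Re (herm_form Q v)"
proof -
  have "Re (herm_form Q (x + t *\<^sub>R v)) = inner (x + t *\<^sub>R v) (Q *v x + t *\<^sub>R (Q *v v))"
    by (simp only: Re_herm_form_eq_inner matrix_vector_right_distrib matrix_vector_mult_scaleR_complex)
  also have "\<dots> = inner x (Q *v x) + t * (inner x (Q *v v) + inner v (Q *v x))
      + t\<^sup>2 * inner v (Q *v v)"
    by (simp add: inner_add_left inner_add_right power2_eq_square algebra_simps)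
  finally show ?thesis
    by (simp add: hermitian_inner_mult_commute[OF assms, of x v] Re_herm_form_eq_inner)
qed

lemma gP8_add_scaleR:
  assumes "\<forall>i j. Q$i$j = cnj (Q$j$i)"
  shows "gP8 Q q d (x + t *\<^sub>R v) (a + t * b)
    = gP8 Q q d x a + t * (2 * inner v (Q *v x) + 2 * inner q v - b) + t\<^sup>2 * Re (herm_form Q v)"
  using Re_herm_form_add_scaleR[OF assms, of x t v]
  by (simp add: gP8_def inner_eq_Re_cinner[symmetric] inner_add_right algebra_simps)

lemma aug_lag_add_scaleR:
  assumes "0 < rho"
  shows "aug_lag lam rho (x + t *\<^sub>R v) psi (a + t * b) = aug_lag lam rho x psi a
    + t * (b + inner ((1 / rho) *\<^sub>R (x - psi) + lam) v) + t\<^sup>2 * ((norm v)\<^sup>2 / (2 * rho))"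
proof -
  have shift: "x + t *\<^sub>R v - psi = (x - psi) + t *\<^sub>R v"
    by simp
  have expand: "aug_lag lam rho (x + t *\<^sub>R v) psi (a + t * b) = a + t * b
      + ((norm (x - psi))\<^sup>2 + t * (2 * inner (x - psi) v) + t\<^sup>2 * (norm v)\<^sup>2) / (2 * rho)
      + inner lam (x - psi) + t * inner lam v"
    unfolding aug_lag_def inner_eq_Re_cinner[symmetric] shift norm_add_scaleR_square
    by (simp add: inner_add_right)
  have linear: "inner ((1 / rho) *\<^sub>R (x - psi) + lam) v = inner (x - psi) v / rho + inner lam v"
    by (simp add: inner_add_left)
  show ?thesis
    unfolding expand linear using assms
    by (simp add: aug_lag_def inner_eq_Re_cinner[symmetric] field_simps)
qed

definition p8_constraint ::
  "('m \<Rightarrow> complex^'n^'n) \<Rightarrow> ('m \<Rightarrow> complex^'n) \<Rightarrow> ('m \<Rightarrow> real)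
    \<Rightarrow> 'm + 'n \<Rightarrow> (complex^'n) \<times> real \<Rightarrow> real"
  where "p8_constraint Q q d i p = (case i of
      Inl k \<Rightarrow> gP8 (Q k) (q k) (d k) (fst p) (snd p)
    | Inr n \<Rightarrow> (cmod (fst p $ n))\<^sup>2 - 1)"

definition p8_constraint_deriv ::
  "('m \<Rightarrow> complex^'n^'n) \<Rightarrow> ('m \<Rightarrow> complex^'n)
    \<Rightarrow> 'm + 'n \<Rightarrow> (complex^'n) \<times> real \<Rightarrow> (complex^'n) \<times> real \<Rightarrow> real"
  where "p8_constraint_deriv Q q i p w = (case i of
      Inl k \<Rightarrow> 2 * inner (fst w) (Q k *v fst p) + 2 * inner (q k) (fst w) - snd w
    | Inr n \<Rightarrow> 2 * inner (fst p $ n) (fst w $ n))"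

definition p8_constraint_curv :: "('m \<Rightarrow> complex^'n^'n) \<Rightarrow> 'm + 'n \<Rightarrow> (complex^'n) \<times> real \<Rightarrow> real"
  where "p8_constraint_curv Q i w = (case i of
      Inl k \<Rightarrow> Re (herm_form (Q k) (fst w))
    | Inr n \<Rightarrow> (cmod (fst w $ n))\<^sup>2)"

lemma p8_constraint_add_scaleR:
  assumes "\<And>k. hermitian_psd (Q k)"
  shows "p8_constraint Q q d i (p + t *\<^sub>R w)
    = p8_constraint Q q d i p + t * p8_constraint_deriv Q q i p w + t\<^sup>2 * p8_constraint_curv Q i w"
proof (cases i)
  case (Inl k)
  have "\<forall>i j. Q k$i$j = cnj (Q k$j$i)"
    using assms[of k] unfolding hermitian_psd_def by blast
  note gP8 = gP8_add_scaleR[OF this]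
  from Inl show ?thesis
    by (simp add: p8_constraint_def p8_constraint_deriv_def p8_constraint_curv_def gP8)
next
  case (Inr n)
  then show ?thesis
    by (simp add: p8_constraint_def p8_constraint_deriv_def p8_constraint_curv_def
        norm_add_scaleR_square)
qed

lemma p8_constraint_curv_nonneg:
  assumes "\<And>k. hermitian_psd (Q k)"
  shows "0 \<le> p8_constraint_curv Q i w"
proof (cases i)
  case (Inl k)
  have "\<forall>x. 0 \<le> Re (herm_form (Q k) x)"
    using assms[of k] unfolding hermitian_psd_def by blast
  with Inl show ?thesis
    by (simp add: p8_constraint_curv_def)
qed (simp add: p8_constraint_curv_def)

lemma sub_feasible_iff_p8_constraint:
  "sub_feasible Q q d phi a \<longleftrightarrow> (\<forall>i. p8_constraint Q q d i (phi, a) \<le> 0)"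
proof -
  have "(\<forall>i. p8_constraint Q q d i (phi, a) \<le> 0) \<longleftrightarrow>
     (\<forall>k. p8_constraint Q q d (Inl k) (phi, a) \<le> 0) \<and> (\<forall>n. p8_constraint Q q d (Inr n) (phi, a) \<le> 0)"
    by (rule split_sum_all)
  also have "\<dots> \<longleftrightarrow> sub_feasible Q q d phi a"
    by (simp add: sub_feasible_def p8_constraint_def abs_square_le_1)
  finally show ?thesis ..
qed

lemma p8_constraint_slater:
  fixes d :: "'m::finite \<Rightarrow> real"
  shows "p8_constraint Q q d i (0, (\<Sum>k\<in>UNIV. \<bar>d k\<bar>) + 1) < 0"
proof (cases i)
  case (Inl k)
  have "d k \<le> (\<Sum>k\<in>UNIV. \<bar>d k\<bar>)"
    using member_le_sum[of k UNIV "\<lambda>k. \<bar>d k\<bar>"] abs_ge_self[of "d k"] by simp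
  with Inl show ?thesis
    by (simp add: p8_constraint_def gP8_def herm_form_def cinner_def)
next
  case (Inr n)
  then show ?thesis
    by (simp add: p8_constraint_def)
qed

lemma convex_sub_feasible:
  fixes Q :: "'m::finite \<Rightarrow> complex^'n::finite^'n"
  assumes "\<And>k. hermitian_psd (Q k)"
  shows "convex {p. sub_feasible Q q d (fst p) (snd p)}"
proof (rule convexI)
  fix p p' :: "(complex^'n) \<times> real" and u v :: real
  assume "p \<in> {p. sub_feasible Q q d (fst p) (snd p)}" "p' \<in> {p. sub_feasible Q q d (fst p) (snd p)}"
    and uv: "0 \<le> u" "0 \<le> v" "u + v = 1"
  then have feasible: "p8_constraint Q q d i p \<le> 0" "p8_constraint Q q d i p' \<le> 0" for i
    by (simp_all add: sub_feasible_iff_p8_constraint)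
  have "p8_constraint Q q d i (u *\<^sub>R p + v *\<^sub>R p') \<le> 0" for i
  proof -
    have "convex_on UNIV (p8_constraint Q q d i)"
      by (rule convex_on_quadratic_expansion[OF p8_constraint_add_scaleR p8_constraint_curv_nonneg])
        (use assms in auto)
    then have "p8_constraint Q q d i ((1 - v) *\<^sub>R p + v *\<^sub>R p')
        \<le> (1 - v) * p8_constraint Q q d i p + v * p8_constraint Q q d i p'"
      using uv by (intro convex_onD) auto
    moreover have "u = 1 - v"
      using uv by simp
    ultimately have "p8_constraint Q q d i (u *\<^sub>R p + v *\<^sub>R p')
        \<le> u * p8_constraint Q q d i p + v * p8_constraint Q q d i p'"
      by simp
    also have "\<dots> \<le> 0"
      using feasible uv by (simp add: add_nonpos_nonpos mult_nonneg_nonpos)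
    finally show ?thesis .
  qed
  then show "u *\<^sub>R p + v *\<^sub>R p' \<in> {p. sub_feasible Q q d (fst p) (snd p)}"
    by (simp add: sub_feasible_iff_p8_constraint)
qed

lemma closed_sub_feasible:
  assumes "continuous_on UNIV f" "continuous_on UNIV g"
  shows "closed {x. sub_feasible Q q d (f x) (g x)}"
  unfolding sub_feasible_def gP8_def herm_form_def cinner_def
  by (intro closed_Collect_conj closed_Collect_all closed_Collect_le continuous_intros assms)

section \<open>KKT conditions of (P8)\<close>

text \<open>For a real function of a complex vector the real gradient is twice the Wirtinger
  derivative with respect to the conjugate variable, hence the factor 2 below.\<close>

definition p8_phi_gradient ::
  "('m \<Rightarrow> complex^'n^'n) \<Rightarrow> ('m \<Rightarrow> complex^'n) \<Rightarrow> ('m \<Rightarrow> real) \<Rightarrow> ('n \<Rightarrow> real)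
    \<Rightarrow> complex^'n \<Rightarrow> complex^'n \<Rightarrow> complex^'n"
  where "p8_phi_gradient Q q nu varpi mu phi = (\<chi> n.
    (\<Sum>k\<in>UNIV. complex_of_real (nu k) * ((Q k *v phi)$n + (q k)$n))
      + complex_of_real (varpi n) * phi$n + mu$n / 2)"

lemma inner_p8_phi_gradient:
  fixes Q :: "'m::finite \<Rightarrow> complex^'n::finite^'n" and l :: "'m + 'n \<Rightarrow> real"
  shows "inner mu v + (\<Sum>i\<in>UNIV. l i * p8_constraint_deriv Q q i (phi, a) (v, 0))
    = 2 * inner v (p8_phi_gradient Q q (\<lambda>k. l (Inl k)) (\<lambda>n. l (Inr n)) mu phi)"
proof -
  define nu where "nu k = l (Inl k)" for k
  define varpi where "varpi n = l (Inr n)" for n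
  have sum_Plus: "(\<Sum>i\<in>UNIV. f i) = (\<Sum>k\<in>UNIV. f (Inl k)) + (\<Sum>n\<in>UNIV. f (Inr n))"
    for f :: "'m + 'n \<Rightarrow> real"
    by (simp add: UNIV_Plus_UNIV[symmetric] sum.Plus del: UNIV_Plus_UNIV)
  have component: "inner (v$n) (p8_phi_gradient Q q nu varpi mu phi $ n)
      = (\<Sum>k\<in>UNIV. nu k * (inner (v$n) ((Q k *v phi)$n) + inner (v$n) ((q k)$n)))
        + varpi n * inner (phi$n) (v$n) + inner (mu$n) (v$n) / 2" for n
  proof -
    have "p8_phi_gradient Q q nu varpi mu phi $ n = (\<Sum>k\<in>UNIV. nu k *\<^sub>R ((Q k *v phi)$n + (q k)$n))
        + varpi n *\<^sub>R phi$n + (1/2) *\<^sub>R mu$n"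
      by (simp add: p8_phi_gradient_def scaleR_conv_of_real)
    then show ?thesis
      by (simp add: inner_add_right inner_sum_right inner_commute)
  qed
  have "inner v (p8_phi_gradient Q q nu varpi mu phi)
      = (\<Sum>k\<in>UNIV. nu k * (inner v (Q k *v phi) + inner (q k) v))
        + (\<Sum>n\<in>UNIV. varpi n * inner (phi$n) (v$n)) + inner mu v / 2"
  proof -
    have "(\<Sum>n\<in>UNIV. \<Sum>k\<in>UNIV. nu k * (inner (v$n) ((Q k *v phi)$n) + inner (v$n) ((q k)$n)))
        = (\<Sum>k\<in>UNIV. nu k * (inner v (Q k *v phi) + inner (q k) v))"
      by (subst sum.swap) (simp add: inner_vec_def sum_distrib_left sum.distrib distrib_left inner_commute)
    then show ?thesis
      unfolding inner_vec_def[of v] component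
      by (simp add: sum.distrib sum_divide_distrib inner_vec_def inner_commute)
  qed
  moreover have "(\<lambda>k. l (Inl k)) = nu" "(\<lambda>n. l (Inr n)) = varpi"
    by (auto simp: nu_def varpi_def)
  ultimately show ?thesis
    unfolding sum_Plus
    by (simp add: p8_constraint_deriv_def nu_def varpi_def sum_distrib_left algebra_simps)
qed

lemma eq_of_real_mult_if_aligned:
  assumes "cmod s = 1" "Im (cnj s * m) = 0"
  shows "m = complex_of_real (Re (cnj s * m)) * s"
proof -
  have "complex_of_real (Re (cnj s * m)) = cnj s * m"
    using assms(2) by (simp add: complex_eq_iff)
  moreover have "cnj s * s = 1"
    using assms(1) by (metis complex_norm_square mult.commute of_real_1 power_one)
  ultimately show ?thesis
    by (simp add: mult.commute mult.left_commute)
qed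

text \<open>All KKT conditions of (P8) except \<open>\<phi> = \<psi>\<close>, with \<open>\<mu>\<close> as multiplier of that constraint;
  stationarity in \<open>(\<phi>, \<alpha>)\<close> is stated as the variational inequality of the convex
  \<open>\<phi>\<close>-subproblem, stationarity in \<open>\<psi>\<close> as \<open>\<mu>\<^sub>n\<close> being a real multiple of \<open>\<psi>\<^sub>n\<close>.\<close>

definition KKT_P8_except_consensus ::
  "('m \<Rightarrow> complex^'n^'n) \<Rightarrow> ('m \<Rightarrow> complex^'n) \<Rightarrow> ('m \<Rightarrow> real)
    \<Rightarrow> complex^'n \<Rightarrow> complex^'n \<Rightarrow> real \<Rightarrow> complex^'n \<Rightarrow> bool"
  where "KKT_P8_except_consensus Q q d phi psi a mu \<longleftrightarrow>
    sub_feasible Q q d phi a \<and> (\<forall>n. cmod (psi$n) = 1) \<and> (\<forall>n. Im (cnj (psi$n) * mu$n) = 0) \<and>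
    (\<forall>phi' a'. sub_feasible Q q d phi' a' \<longrightarrow> 0 \<le> (a' - a) + inner mu (phi' - phi))"

lemma closed_KKT_P8_except_consensus:
  "closed {(phi, psi, a, mu). KKT_P8_except_consensus Q q d phi psi a mu}"
proof -
  have "{(phi, psi, a, mu). KKT_P8_except_consensus Q q d phi psi a mu}
    = {z. sub_feasible Q q d (fst z) (fst (snd (snd z)))}
      \<inter> (\<Inter>n. {z. cmod (fst (snd z) $ n) = 1})
      \<inter> (\<Inter>n. {z. Im (cnj (fst (snd z) $ n) * snd (snd (snd z)) $ n) = 0})
      \<inter> (\<Inter>(phi', a') \<in> {(phi', a'). sub_feasible Q q d phi' a'}.
          {z. 0 \<le> (a' - fst (snd (snd z))) + inner (snd (snd (snd z))) (phi' - fst z)})"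
    by (auto simp: KKT_P8_except_consensus_def)
  also have "closed \<dots>"
    by (intro closed_Int closed_INT closed_sub_feasible closed_Collect_eq closed_Collect_le
        continuous_intros ballI) (clarsimp, intro closed_Collect_le continuous_intros)
  finally show ?thesis .
qed

lemma p8_multipliers_if_variational_inequality:
  fixes Q :: "'m::finite \<Rightarrow> complex^'n::finite^'n"
  assumes psd: "\<And>k. hermitian_psd (Q k)"
    and feasible: "sub_feasible Q q d phi a"
    and vi: "\<And>phi' a'. sub_feasible Q q d phi' a' \<Longrightarrow> 0 \<le> (a' - a) + inner mu (phi' - phi)"
  shows "\<exists>l. (\<forall>i. 0 \<le> l i) \<and> (\<forall>i. l i * p8_constraint Q q d i (phi, a) = 0) \<and>
      (\<forall>w. snd w + inner mu (fst w) + (\<Sum>i\<in>UNIV. l i * p8_constraint_deriv Q q i (phi, a) w) = 0)"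
proof (rule convex_slater_stationarity[where Ef = "\<lambda>_. 0"])
  show "snd (x + t *\<^sub>R w) + inner mu (fst (x + t *\<^sub>R w))
      = snd x + inner mu (fst x) + t * (snd w + inner mu (fst w)) + t\<^sup>2 * 0" for x w t
    by (simp add: inner_add_right algebra_simps)
  show "p8_constraint Q q d i (x + t *\<^sub>R w) = p8_constraint Q q d i x
      + t * p8_constraint_deriv Q q i x w + t\<^sup>2 * p8_constraint_curv Q i w" for i x w t
    by (rule p8_constraint_add_scaleR[OF psd])
  show "p8_constraint Q q d i (0, (\<Sum>k\<in>UNIV. \<bar>d k\<bar>) + 1) < 0" for i
    by (rule p8_constraint_slater)
  show "snd (phi, a) + inner mu (fst (phi, a)) \<le> snd p + inner mu (fst p)"
    if "\<forall>i. p8_constraint Q q d i p \<le> 0" for p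
  proof (cases p)
    case (Pair phi' a')
    with that have "0 \<le> (a' - a) + inner mu (phi' - phi)"
      by (intro vi) (simp add: sub_feasible_iff_p8_constraint)
    with Pair show ?thesis
      by (simp add: inner_diff_right)
  qed
qed (use feasible p8_constraint_curv_nonneg[OF psd] in \<open>auto simp: sub_feasible_iff_p8_constraint\<close>)

lemma KKT_P8_if_except_consensus:
  fixes Q :: "'m::finite \<Rightarrow> complex^'n::finite^'n"
  assumes psd: "\<And>k. hermitian_psd (Q k)"
    and kkt: "KKT_P8_except_consensus Q q d phi psi a mu"
    and consensus: "phi = psi"
  shows "KKT_P8 Q q d phi psi a"
proof -
  note kkt = kkt[unfolded KKT_P8_except_consensus_def]
  have "\<exists>l. (\<forall>i. 0 \<le> l i) \<and> (\<forall>i. l i * p8_constraint Q q d i (phi, a) = 0) \<and>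
      (\<forall>w. snd w + inner mu (fst w) + (\<Sum>i\<in>UNIV. l i * p8_constraint_deriv Q q i (phi, a) w) = 0)"
    by (rule p8_multipliers_if_variational_inequality[OF psd]) (use kkt in auto)
  then obtain l where l: "\<forall>i. 0 \<le> l i" and slack: "\<forall>i. l i * p8_constraint Q q d i (phi, a) = 0"
    and stationary: "\<forall>w. snd w + inner mu (fst w) + (\<Sum>i\<in>UNIV. l i * p8_constraint_deriv Q q i (phi, a) w) = 0"
    by blast
  define nu where "nu k = l (Inl k)" for k
  define varpi where "varpi n = l (Inr n)" for n
  define xi where "xi n = Re (cnj (psi$n) * mu$n) / 2" for n
  have alpha: "1 - (\<Sum>k\<in>UNIV. nu k) = 0"
    using stationary[rule_format, of "(0, 1)"]
    by (simp add: UNIV_Plus_UNIV[symmetric] sum.Plus sum_negf p8_constraint_deriv_def nu_def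
        del: UNIV_Plus_UNIV)
  have phi: "p8_phi_gradient Q q nu varpi mu phi = 0"
  proof -
    let ?G = "p8_phi_gradient Q q nu varpi mu phi"
    have "(\<lambda>k. l (Inl k)) = nu" "(\<lambda>n. l (Inr n)) = varpi"
      by (auto simp: nu_def varpi_def)
    with stationary[rule_format, of "(?G, 0)"] have "2 * inner ?G ?G = 0"
      using inner_p8_phi_gradient[of mu ?G l Q q phi a] by simp
    then show ?thesis
      by simp
  qed
  have psi: "- mu$n / 2 + complex_of_real (xi n) * psi$n = 0" for n
    using eq_of_real_mult_if_aligned[of "psi$n" "mu$n"] kkt by (simp add: xi_def)
  have slack_k: "nu k * gP8 (Q k) (q k) (d k) phi a = 0" for k
    using slack[rule_format, of "Inl k"] by (simp add: nu_def p8_constraint_def)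
  have slack_n: "varpi n * ((cmod (phi$n))\<^sup>2 - 1) = 0" for n
    using slack[rule_format, of "Inr n"] by (simp add: varpi_def p8_constraint_def)
  have feasible: "\<forall>k. gP8 (Q k) (q k) (d k) phi a \<le> 0" "\<forall>n. cmod (phi$n) \<le> 1"
    using kkt by (simp_all add: sub_feasible_def)
  show ?thesis
    unfolding KKT_P8_def
  proof (rule exI[of _ nu], rule exI[of _ varpi], rule exI[of _ mu], rule exI[of _ xi],
      intro conjI allI)
    show "(\<Sum>k\<in>UNIV. complex_of_real (nu k) * ((Q k *v phi)$n + (q k)$n))
        + complex_of_real (varpi n) * phi$n + mu$n / 2 = 0" for n
      using phi by (simp add: p8_phi_gradient_def vec_eq_iff)
    show "- mu$n / 2 + complex_of_real (xi n) * psi$n = 0" for n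
      by (rule psi)
    show "0 \<le> nu k" for k
      using l by (simp add: nu_def)
    show "0 \<le> varpi n" for n
      using l by (simp add: varpi_def)
  qed (use alpha feasible kkt consensus slack_k slack_n in auto)
qed

section \<open>The inner loop\<close>

lemma phase_exp_Arg:
  assumes "p = exp (\<i> * complex_of_real (Arg w))"
  shows "cmod p = 1" "cnj p * w = complex_of_real (cmod w)"
proof -
  show unit: "cmod p = 1"
    using assms by (simp add: norm_exp_i_times)
  have "w = complex_of_real (cmod w) * p"
    using rcis_cmod_Arg[of w] by (simp add: rcis_def cis_conv_exp assms)
  then have "cnj p * w = complex_of_real (cmod w) * (cnj p * p)"
    by (metis mult.left_commute)
  also have "cnj p * p = 1"
    using unit by (metis complex_norm_square mult.commute of_real_1 power_one)
  finally show "cnj p * w = complex_of_real (cmod w)"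
    by simp
qed

lemma norm_square_if_unit_modulus:
  fixes z :: "complex^'n::finite"
  assumes "\<forall>n. cmod (z$n) = 1"
  shows "(norm z)\<^sup>2 = real CARD('n)"
proof -
  have "(norm z)\<^sup>2 = (\<Sum>n\<in>UNIV. inner (z$n) (z$n))"
    by (simp add: power2_norm_eq_inner inner_vec_def)
  also have "\<dots> = (\<Sum>n\<in>UNIV. (cmod (z$n))\<^sup>2)"
    by (simp only: power2_norm_eq_inner)
  finally show ?thesis
    using assms by simp
qed

lemma aug_lag_phase_step_le:
  fixes phi psi z lam :: "complex^'n::finite"
  assumes rho: "0 < rho"
    and psi: "\<And>n. psi$n = exp (\<i> * complex_of_real (Arg ((phi + rho *\<^sub>R lam)$n)))"
    and z: "\<forall>n. cmod (z$n) = 1"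
  shows "aug_lag lam rho phi psi a \<le> aug_lag lam rho phi z a"
proof -
  \<comment> \<open>On the torus \<open>\<parallel>z\<parallel>\<^sup>2 = N\<close>, so only \<open>Re\<langle>\<phi> + \<rho>\<lambda>, z\<rangle>\<close> varies,
    and aligning the phases with \<open>\<phi> + \<rho>\<lambda>\<close> maximises it.\<close>
  define w where "w = phi + rho *\<^sub>R lam"
  have "inner (w$n) (z$n) \<le> inner (w$n) (psi$n)" for n
  proof -
    have "inner (w$n) (z$n) \<le> cmod (w$n)"
      using norm_cauchy_schwarz[of "w$n" "z$n"] z by simp
    also have "cmod (w$n) = Re (cnj (psi$n) * w$n)"
      using phase_exp_Arg(2)[OF psi[of n]] by (simp add: w_def)
    also have "\<dots> = inner (w$n) (psi$n)"
      by (simp add: inner_complex_def)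
    finally show ?thesis .
  qed
  then have "inner w z \<le> inner w psi"
    unfolding inner_vec_def by (rule sum_mono)
  then have "(inner phi z + rho * inner lam z) / rho \<le> (inner phi psi + rho * inner lam psi) / rho"
    using rho by (simp add: w_def inner_add_left divide_right_mono)
  then have "inner phi z / rho + inner lam z \<le> inner phi psi / rho + inner lam psi"
    using rho by (simp add: add_divide_distrib)
  moreover have "(norm psi)\<^sup>2 = (norm z)\<^sup>2"
    using phase_exp_Arg(1)[OF psi] z by (simp add: norm_square_if_unit_modulus)
  ultimately show ?thesis
    using rho
    by (simp add: aug_lag_def inner_eq_Re_cinner[symmetric] power2_norm_eq_inner inner_diff_left
        inner_diff_right inner_commute field_simps)
qed

lemma tendsto_aug_lag:
  assumes "(f \<longlongrightarrow> phi) F" "(g \<longlongrightarrow> psi) F" "(h \<longlongrightarrow> a) F"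
  shows "((\<lambda>x. aug_lag lam rho (f x) (g x) (h x)) \<longlongrightarrow> aug_lag lam rho phi psi a) F"
  unfolding aug_lag_def cinner_def by (intro tendsto_intros assms)

lemma aug_lag_inner_iterates_decseq:
  fixes ph ps :: "nat \<Rightarrow> complex^'n::finite" and al :: "nat \<Rightarrow> real"
  assumes rho: "0 < rho"
    and step_i: "\<And>t. sub_feasible Q q d (ph (Suc t)) (al (Suc t)) \<and>
        (\<forall>phi' a'. sub_feasible Q q d phi' a' \<longrightarrow>
           aug_lag lam rho (ph (Suc t)) (ps t) (al (Suc t)) \<le> aug_lag lam rho phi' (ps t) a')"
    and step_ii: "\<And>t n. ps (Suc t) $ n = exp (\<i> * complex_of_real (Arg ((ph (Suc t) + rho *\<^sub>R lam) $ n)))"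
  shows "decseq (\<lambda>t. aug_lag lam rho (ph (Suc t)) (ps (Suc t)) (al (Suc t)))"
proof (rule decseq_SucI)
  fix t
  have "aug_lag lam rho (ph (Suc (Suc t))) (ps (Suc (Suc t))) (al (Suc (Suc t)))
      \<le> aug_lag lam rho (ph (Suc (Suc t))) (ps (Suc t)) (al (Suc (Suc t)))"
    using phase_exp_Arg(1)[OF step_ii] by (intro aug_lag_phase_step_le[OF rho step_ii]) blast
  also have "\<dots> \<le> aug_lag lam rho (ph (Suc t)) (ps (Suc t)) (al (Suc t))"
    using step_i[of "Suc t"] step_i[of t] by blast
  finally show "aug_lag lam rho (ph (Suc (Suc t))) (ps (Suc (Suc t))) (al (Suc (Suc t)))
      \<le> aug_lag lam rho (ph (Suc t)) (ps (Suc t)) (al (Suc t))" .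
qed

lemma inner_limit_point_minimizes:
  fixes ph ps :: "nat \<Rightarrow> complex^'n::finite" and al :: "nat \<Rightarrow> real"
  assumes rho: "0 < rho"
    and step_i: "\<And>t. sub_feasible Q q d (ph (Suc t)) (al (Suc t)) \<and>
        (\<forall>phi' a'. sub_feasible Q q d phi' a' \<longrightarrow>
           aug_lag lam rho (ph (Suc t)) (ps t) (al (Suc t)) \<le> aug_lag lam rho phi' (ps t) a')"
    and step_ii: "\<And>t n. ps (Suc t) $ n = exp (\<i> * complex_of_real (Arg ((ph (Suc t) + rho *\<^sub>R lam) $ n)))"
    and limit: "seq_limit_point (P, S, A) (\<lambda>t. (ph (Suc t), ps (Suc t), al (Suc t)))"
    and feasible: "sub_feasible Q q d phi' a'"
  shows "aug_lag lam rho P S A \<le> aug_lag lam rho phi' S a'"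
proof -
  obtain r where r: "strict_mono r"
    and lim: "((\<lambda>t. (ph (Suc t), ps (Suc t), al (Suc t))) \<circ> r) \<longlonglongrightarrow> (P, S, A)"
    using limit unfolding seq_limit_point_def by blast
  have lim_P: "(\<lambda>j. ph (Suc (r j))) \<longlonglongrightarrow> P"
    using tendsto_fst[OF lim] by (simp add: o_def)
  have lim_S: "(\<lambda>j. ps (Suc (r j))) \<longlonglongrightarrow> S"
    using tendsto_fst[OF tendsto_snd[OF lim]] by (simp add: o_def)
  have lim_A: "(\<lambda>j. al (Suc (r j))) \<longlonglongrightarrow> A"
    using tendsto_snd[OF tendsto_snd[OF lim]] by (simp add: o_def)
  define H where "H t = aug_lag lam rho (ph (Suc t)) (ps (Suc t)) (al (Suc t))" for t
  have H_decseq: "decseq H"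
    unfolding H_def using rho step_i step_ii by (rule aug_lag_inner_iterates_decseq)
  have "(H \<circ> r) \<longlonglongrightarrow> aug_lag lam rho P S A"
    unfolding H_def o_def by (intro tendsto_aug_lag lim_P lim_S lim_A)
  then have H_lower: "aug_lag lam rho P S A \<le> H t" for t
  proof (rule LIMSEQ_le_const2)
    have "H (r j) \<le> H t" if "t \<le> j" for j
      using H_decseq that seq_suble[OF r, of j] unfolding decseq_def by simp
    then show "\<exists>N. \<forall>j\<ge>N. (H \<circ> r) j \<le> H t"
      by auto
  qed
  have "aug_lag lam rho P S A \<le> aug_lag lam rho phi' (ps (Suc (r j))) a'" for j
  proof -
    have "aug_lag lam rho P S A \<le> H (Suc (r j))"
      by (rule H_lower)
    also have "\<dots> \<le> aug_lag lam rho (ph (Suc (Suc (r j)))) (ps (Suc (r j))) (al (Suc (Suc (r j))))"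
      unfolding H_def using phase_exp_Arg(1)[OF step_ii] by (intro aug_lag_phase_step_le[OF rho step_ii]) blast
    also have "\<dots> \<le> aug_lag lam rho phi' (ps (Suc (r j))) a'"
      using step_i[of "Suc (r j)"] feasible by blast
    finally show ?thesis .
  qed
  moreover have "(\<lambda>j. aug_lag lam rho phi' (ps (Suc (r j))) a') \<longlonglongrightarrow> aug_lag lam rho phi' S a'"
    by (intro tendsto_aug_lag tendsto_const lim_S)
  ultimately show ?thesis
    by (intro LIMSEQ_le_const) auto
qed

lemma phase_aligned_multiplier:
  fixes s p l :: complex
  assumes "0 < rho" "Im (cnj s * (p + rho *\<^sub>R l)) = 0"
  shows "Im (cnj s * ((1 / rho) *\<^sub>R (p - s) + l)) = 0"
proof -
  have "(1 / rho) *\<^sub>R (p - s) + l = (1 / rho) *\<^sub>R ((p + rho *\<^sub>R l) - s)"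
    using assms(1) by (simp add: algebra_simps)
  with assms(2) show ?thesis
    by (simp add: right_diff_distrib)
qed

lemma inner_limit_point_feasible_aligned:
  fixes ph ps :: "nat \<Rightarrow> complex^'n::finite" and al :: "nat \<Rightarrow> real"
  assumes step_i: "\<And>t. sub_feasible Q q d (ph (Suc t)) (al (Suc t))"
    and step_ii: "\<And>t n. ps (Suc t) $ n = exp (\<i> * complex_of_real (Arg ((ph (Suc t) + rho *\<^sub>R lam) $ n)))"
    and limit: "seq_limit_point (P, S, A) (\<lambda>t. (ph (Suc t), ps (Suc t), al (Suc t)))"
  shows "sub_feasible Q q d P A \<and> (\<forall>n. cmod (S$n) = 1) \<and>
    (\<forall>n. Im (cnj (S$n) * (P + rho *\<^sub>R lam) $ n) = 0)"
proof -
  define C where "C = {z. sub_feasible Q q d (fst z) (snd (snd z)) \<and>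
    (\<forall>n. cmod (fst (snd z) $ n) = 1) \<and> (\<forall>n. Im (cnj (fst (snd z) $ n) * (fst z + rho *\<^sub>R lam) $ n) = 0)}"
  have closed: "closed C"
    unfolding C_def Collect_conj_eq Collect_all_eq
    by (intro closed_Int closed_INT closed_sub_feasible closed_Collect_eq continuous_intros ballI)
  have iterates: "(ph (Suc t), ps (Suc t), al (Suc t)) \<in> C" for t
  proof -
    have "Im (cnj (ps (Suc t) $ n) * (ph (Suc t) + rho *\<^sub>R lam) $ n) = 0" for n
      using phase_exp_Arg(2)[OF step_ii[of t n]] by (metis Im_complex_of_real)
    with step_i[of t] phase_exp_Arg(1)[OF step_ii[of t]] show ?thesis
      unfolding C_def by simp
  qed
  obtain r where "((\<lambda>t. (ph (Suc t), ps (Suc t), al (Suc t))) \<circ> r) \<longlonglongrightarrow> (P, S, A)"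
    using limit unfolding seq_limit_point_def by blast
  then have "(P, S, A) \<in> C"
    by (rule closed_sequentially[OF closed, rotated]) (simp add: iterates)
  then show ?thesis
    by (simp add: C_def)
qed

lemma KKT_P8_except_consensus_inner_limit_point:
  fixes Q :: "'m::finite \<Rightarrow> complex^'n::finite^'n"
    and ph ps :: "nat \<Rightarrow> complex^'n" and al :: "nat \<Rightarrow> real"
  assumes psd: "\<And>k. hermitian_psd (Q k)" and rho: "0 < rho"
    and step_i: "\<And>t. sub_feasible Q q d (ph (Suc t)) (al (Suc t)) \<and>
        (\<forall>phi' a'. sub_feasible Q q d phi' a' \<longrightarrow>
           aug_lag lam rho (ph (Suc t)) (ps t) (al (Suc t)) \<le> aug_lag lam rho phi' (ps t) a')"
    and step_ii: "\<And>t n. ps (Suc t) $ n = exp (\<i> * complex_of_real (Arg ((ph (Suc t) + rho *\<^sub>R lam) $ n)))"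
    and limit: "seq_limit_point (P, S, A) (\<lambda>t. (ph (Suc t), ps (Suc t), al (Suc t)))"
  shows "KKT_P8_except_consensus Q q d P S A ((1 / rho) *\<^sub>R (P - S) + lam)"
proof -
  have feasible: "sub_feasible Q q d P A" and unit: "\<forall>n. cmod (S$n) = 1"
    and aligned: "\<forall>n. Im (cnj (S$n) * (P + rho *\<^sub>R lam) $ n) = 0"
    using inner_limit_point_feasible_aligned[OF conjunct1[OF step_i] step_ii limit] by blast+
  have "0 \<le> (a' - A) + inner ((1 / rho) *\<^sub>R (P - S) + lam) (phi' - P)"
    if "sub_feasible Q q d phi' a'" for phi' a'
  proof -
    have "0 \<le> snd ((phi', a') - (P, A)) + inner ((1 / rho) *\<^sub>R (fst (P, A) - S) + lam) (fst ((phi', a') - (P, A)))"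
    proof (rule first_order_of_min_on_convex[where f = "\<lambda>p. aug_lag lam rho (fst p) S (snd p)"
          and E = "\<lambda>w. (norm (fst w))\<^sup>2 / (2 * rho)"])
      show "aug_lag lam rho (fst (x + t *\<^sub>R w)) S (snd (x + t *\<^sub>R w)) = aug_lag lam rho (fst x) S (snd x)
          + t * (snd w + inner ((1 / rho) *\<^sub>R (fst x - S) + lam) (fst w)) + t\<^sup>2 * ((norm (fst w))\<^sup>2 / (2 * rho))"
        for x w t
        using aug_lag_add_scaleR[OF rho] by simp
      show "convex {p. sub_feasible Q q d (fst p) (snd p)}"
        by (rule convex_sub_feasible[OF psd])
      show "aug_lag lam rho (fst (P, A)) S (snd (P, A)) \<le> aug_lag lam rho (fst p) S (snd p)"
        if "p \<in> {p. sub_feasible Q q d (fst p) (snd p)}" for p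
        using inner_limit_point_minimizes[OF rho step_i step_ii limit] that by (cases p) simp
    qed (use feasible that in simp_all)
    then show ?thesis
      by simp
  qed
  moreover have "\<forall>n. Im (cnj (S$n) * ((1 / rho) *\<^sub>R (P - S) + lam) $ n) = 0"
    using phase_aligned_multiplier[OF rho] aligned by simp
  ultimately show ?thesis
    using feasible unit by (simp add: KKT_P8_except_consensus_def)
qed

section \<open>The outer loop\<close>

lemma penalty_pos_decseq:
  fixes rho :: "nat \<Rightarrow> real"
  assumes c: "0 < c" "c < 1" and rho0: "0 < rho 0"
    and step: "\<And>k. rho (Suc k) = rho k \<or> rho (Suc k) = c * rho k"
  shows penalty_pos: "0 < rho k" and penalty_decseq: "decseq rho"
proof -
  show pos: "0 < rho k" for k
  proof (induction k)
    case (Suc k)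
    with step[of k] c show ?case
      by auto
  qed (rule rho0)
  have "rho (Suc k) \<le> rho k" for k
    using step[of k] pos[of k] c by (auto simp: mult_le_cancel_right1)
  then show "decseq rho"
    by (rule decseq_SucI)
qed

lemma penalty_tendsto_0_or_eventually_const:
  fixes rho :: "nat \<Rightarrow> real"
  assumes c: "0 < c" "c < 1" and rho0: "0 < rho 0"
    and step: "\<And>k. rho (Suc k) = rho k \<or> rho (Suc k) = c * rho k"
  shows "rho \<longlonglongrightarrow> 0 \<or> (\<forall>\<^sub>F k in sequentially. rho (Suc k) = rho k)"
proof -
  have pos: "0 < rho k" for k
    by (rule penalty_pos[OF c rho0 step])
  obtain L where L: "rho \<longlonglongrightarrow> L" "\<And>k. L \<le> rho k"
    using decseq_convergent[OF penalty_decseq[OF c rho0 step], of 0] pos less_imp_le by blast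
  have "0 \<le> L"
    using pos by (intro LIMSEQ_le_const[OF L(1)]) (auto intro: less_imp_le)
  then consider "L = 0" | "0 < L"
    by linarith
  then show ?thesis
  proof cases
    case 1
    with L(1) show ?thesis
      by simp
  next
    case 2
    with c have "L < L / c"
      by (simp add: less_divide_eq)
    with L(1) have "\<forall>\<^sub>F k in sequentially. rho k < L / c"
      by (rule order_tendstoD(2))
    then have "\<forall>\<^sub>F k in sequentially. rho (Suc k) = rho k"
    proof (rule eventually_mono)
      fix k
      assume "rho k < L / c"
      then have "c * rho k < L"
        using c by (simp add: less_divide_eq mult.commute)
      with L(2)[of "Suc k"] step[of k] show "rho (Suc k) = rho k"
        by auto
    qed
    then show ?thesis
      by simp
  qed
qed

lemma norm_le_max_of_reset:
  fixes lam mu :: "nat \<Rightarrow> 'a::real_normed_vector"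
  assumes "\<And>k. lam (Suc k) = lam k \<or> lam (Suc k) = mu k" "\<And>k. norm (mu k) \<le> M"
  shows "norm (lam k) \<le> max (norm (lam 0)) M"
proof (induction k)
  case (Suc k)
  from assms(1)[of k] show ?case
  proof
    assume "lam (Suc k) = mu k"
    with assms(2)[of k] show ?thesis
      by simp
  qed (use Suc.IH in simp)
qed simp

lemma norm_le_card_mult_linf: "norm v \<le> real CARD('n) * linf v"
  for v :: "complex^'n::finite"
proof -
  have "norm v \<le> (\<Sum>n\<in>UNIV. cmod (v$n))"
    unfolding norm_vec_def by (rule L2_set_le_sum) simp
  also have "\<dots> \<le> (\<Sum>n\<in>(UNIV::'n set). linf v)"
    unfolding linf_def by (intro sum_mono Max_ge) auto
  finally show ?thesis
    by simp
qed

lemma norm_le_penalty_mult: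
  fixes x lam :: "nat \<Rightarrow> 'a::real_normed_vector" and rho :: "nat \<Rightarrow> real"
  assumes pos: "\<And>k. 0 < rho k"
    and update: "\<And>k. lam (Suc k) = lam k \<or> lam (Suc k) = (1 / rho k) *\<^sub>R x k + lam k"
    and bound: "\<And>k. norm ((1 / rho k) *\<^sub>R x k + lam k) \<le> M"
  shows "norm (x k) \<le> rho k * (M + max (norm (lam 0)) M)"
proof -
  define mu where "mu k = (1 / rho k) *\<^sub>R x k + lam k" for k
  have "norm (lam k) \<le> max (norm (lam 0)) M"
    using update bound unfolding mu_def[symmetric] by (rule norm_le_max_of_reset)
  then have "norm (mu k - lam k) \<le> M + max (norm (lam 0)) M"
    using norm_triangle_ineq4[of "mu k" "lam k"] bound[of k] by (simp add: mu_def)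
  moreover have "norm (x k) = rho k * norm (mu k - lam k)"
    using pos[of k] by (simp add: mu_def)
  ultimately show ?thesis
    using pos[of k] by (metis mult_left_mono less_imp_le)
qed

lemma consensus_gap_tendsto_zero:
  fixes x lam :: "nat \<Rightarrow> complex^'n::finite" and rho eta :: "nat \<Rightarrow> real"
  assumes c: "0 < c" "c < 1" and eta: "eta \<longlonglongrightarrow> 0" and rho0: "0 < rho 0"
    and update: "\<And>k.
        (linf (x k) \<le> eta k \<longrightarrow> lam (Suc k) = lam k + (1 / rho k) *\<^sub>R x k \<and> rho (Suc k) = rho k) \<and>
        (\<not> linf (x k) \<le> eta k \<longrightarrow> lam (Suc k) = lam k \<and> rho (Suc k) = c * rho k)"
    and bounded: "bounded (range (\<lambda>k. (1 / rho k) *\<^sub>R x k + lam k))"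
  shows "x \<longlonglongrightarrow> 0"
proof -
  have step: "rho (Suc k) = rho k \<or> rho (Suc k) = c * rho k" for k
    using update[of k] by (cases "linf (x k) \<le> eta k") simp_all
  have pos: "0 < rho k" for k
    by (rule penalty_pos[OF c rho0 step])
  obtain M where "\<And>k. norm ((1 / rho k) *\<^sub>R x k + lam k) \<le> M"
    using bounded unfolding bounded_iff by auto
  moreover have "lam (Suc k) = lam k \<or> lam (Suc k) = (1 / rho k) *\<^sub>R x k + lam k" for k
    using update[of k] by (cases "linf (x k) \<le> eta k") simp_all
  ultimately have gap: "norm (x k) \<le> rho k * (M + max (norm (lam 0)) M)" for k
    using pos by (intro norm_le_penalty_mult) auto
  from penalty_tendsto_0_or_eventually_const[OF c rho0 step] show ?thesis
  proof
    assume "rho \<longlonglongrightarrow> 0"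
    then have "(\<lambda>k. rho k * (M + max (norm (lam 0)) M)) \<longlonglongrightarrow> 0"
      by (rule tendsto_mult_left_zero)
    moreover have "\<forall>\<^sub>F k in sequentially. norm (x k) \<le> rho k * (M + max (norm (lam 0)) M)"
      using gap by (simp add: always_eventually)
    ultimately show ?thesis
      by (rule Lim_null_comparison[rotated])
  next
    assume "\<forall>\<^sub>F k in sequentially. rho (Suc k) = rho k"
    then have "\<forall>\<^sub>F k in sequentially. norm (x k) \<le> real CARD('n) * eta k"
    proof (rule eventually_mono)
      fix k
      assume "rho (Suc k) = rho k"
      have "linf (x k) \<le> eta k"
      proof (rule ccontr)
        assume "\<not> linf (x k) \<le> eta k"
        with update[of k] have "rho (Suc k) = c * rho k"
          by blast
        with \<open>rho (Suc k) = rho k\<close> have "c * rho k = 1 * rho k"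
          by linarith
        with pos[of k] c show False
          by (metis mult_right_cancel less_irrefl)
      qed
      then have "real CARD('n) * linf (x k) \<le> real CARD('n) * eta k"
        by (rule mult_left_mono) simp
      then show "norm (x k) \<le> real CARD('n) * eta k"
        using norm_le_card_mult_linf[of "x k"] by linarith
    qed
    moreover have "(\<lambda>k. real CARD('n) * eta k) \<longlonglongrightarrow> 0"
      using eta by (rule tendsto_mult_right_zero)
    ultimately show ?thesis
      by (rule Lim_null_comparison)
  qed
qed

lemma KKT_P8_limit_point:
  fixes Q :: "'m::finite \<Rightarrow> complex^'n::finite^'n"
    and phi psi mu :: "nat \<Rightarrow> complex^'n" and alpha :: "nat \<Rightarrow> real"
  assumes psd: "\<And>k. hermitian_psd (Q k)"
    and kkt: "\<And>k. KKT_P8_except_consensus Q q d (phi k) (psi k) (alpha k) (mu k)"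
    and gap: "(\<lambda>k. phi k - psi k) \<longlonglongrightarrow> 0"
    and bounded: "bounded (range mu)"
    and limit: "seq_limit_point (phib, psib, alphab) (\<lambda>k. (phi k, psi k, alpha k))"
  shows "KKT_P8 Q q d phib psib alphab"
proof -
  obtain r where r: "strict_mono r" and lim: "((\<lambda>k. (phi k, psi k, alpha k)) \<circ> r) \<longlonglongrightarrow> (phib, psib, alphab)"
    using limit unfolding seq_limit_point_def by blast
  have "bounded (range (mu \<circ> r))"
    using bounded by (rule bounded_subset) auto
  then obtain mub s where s: "strict_mono s" and lim_mu: "(mu \<circ> r \<circ> s) \<longlonglongrightarrow> mub"
    using bounded_imp_convergent_subsequence by blast
  define T where "T = r \<circ> s"
  have lim_T: "(\<lambda>j. (phi (T j), psi (T j), alpha (T j))) \<longlonglongrightarrow> (phib, psib, alphab)"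
    using LIMSEQ_subseq_LIMSEQ[OF lim s] by (simp add: T_def o_def)
  have "(\<lambda>j. (phi (T j), psi (T j), alpha (T j), mu (T j))) \<longlonglongrightarrow> (phib, psib, alphab, mub)"
    using tendsto_fst[OF lim_T] tendsto_fst[OF tendsto_snd[OF lim_T]] tendsto_snd[OF tendsto_snd[OF lim_T]]
      lim_mu
    by (intro tendsto_Pair) (simp_all add: T_def o_def)
  then have "(phib, psib, alphab, mub) \<in> {(phi, psi, a, mu). KKT_P8_except_consensus Q q d phi psi a mu}"
    by (rule closed_sequentially[OF closed_KKT_P8_except_consensus, rotated]) (simp add: kkt)
  moreover have "phib - psib = 0"
  proof (rule LIMSEQ_unique)
    show "(\<lambda>j. phi (T j) - psi (T j)) \<longlonglongrightarrow> phib - psib"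
      using tendsto_fst[OF lim_T] tendsto_fst[OF tendsto_snd[OF lim_T]] by (intro tendsto_diff) simp_all
    show "(\<lambda>j. phi (T j) - psi (T j)) \<longlonglongrightarrow> 0"
      using LIMSEQ_subseq_LIMSEQ[OF gap strict_mono_o[OF r s]] by (simp add: T_def o_def)
  qed
  ultimately show ?thesis
    using KKT_P8_if_except_consensus[OF psd] by simp
qed

theorem theorem1:
  fixes Q :: "'m::finite \<Rightarrow> complex^'n::finite^'n"
    and q :: "'m \<Rightarrow> complex^'n" and d :: "'m \<Rightarrow> real"
    and c :: real and eta :: "nat \<Rightarrow> real"
    and phi psi :: "nat \<Rightarrow> nat \<Rightarrow> complex^'n" and alpha :: "nat \<Rightarrow> nat \<Rightarrow> real"
    and phiO psiO :: "nat \<Rightarrow> complex^'n" and alphaO :: "nat \<Rightarrow> real"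
    and lam :: "nat \<Rightarrow> complex^'n" and rho :: "nat \<Rightarrow> real"
    and phib psib :: "complex^'n" and alphab :: real
  assumes psd: "\<And>k. hermitian_psd (Q k)"
    and c: "0 < c" "c < 1"
    and eta: "decseq eta" "eta \<longlonglongrightarrow> 0"
    and rho0: "rho 0 > 0"
    and inner_start: "\<And>k. k \<ge> 1 \<Longrightarrow>
        phi k 0 = phiO (k - 1) \<and> psi k 0 = psiO (k - 1) \<and> alpha k 0 = alphaO (k - 1)"
    and step_i: "\<And>k t. sub_feasible Q q d (phi k (Suc t)) (alpha k (Suc t)) \<and>
        (\<forall>phi' a'. sub_feasible Q q d phi' a' \<longrightarrow>
           aug_lag (lam k) (rho k) (phi k (Suc t)) (psi k t) (alpha k (Suc t))
             \<le> aug_lag (lam k) (rho k) phi' (psi k t) a')"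
    and step_ii: "\<And>k t n. psi k (Suc t) $ n =
        exp (\<i> * complex_of_real (Arg ((phi k (Suc t) + rho k *\<^sub>R lam k) $ n)))"
    and outer_iter: "\<And>k. seq_limit_point (phiO k, psiO k, alphaO k)
        (\<lambda>t. (phi k (Suc t), psi k (Suc t), alpha k (Suc t)))"
    and outer_update: "\<And>k.
        (linf (phiO k - psiO k) \<le> eta k \<longrightarrow>
           lam (Suc k) = lam k + (1 / rho k) *\<^sub>R (phiO k - psiO k) \<and> rho (Suc k) = rho k) \<and>
        (\<not> linf (phiO k - psiO k) \<le> eta k \<longrightarrow>
           lam (Suc k) = lam k \<and> rho (Suc k) = c * rho k)"
    and mu_bounded: "bounded (range (\<lambda>k. (1 / rho k) *\<^sub>R (phiO k - psiO k) + lam k))"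
    and limpt: "seq_limit_point (phib, psib, alphab) (\<lambda>k. (phiO k, psiO k, alphaO k))"
  shows "KKT_P8 Q q d phib psib alphab"
proof -
  have step: "rho (Suc k) = rho k \<or> rho (Suc k) = c * rho k" for k
    using outer_update[of k] by (cases "linf (phiO k - psiO k) \<le> eta k") simp_all
  have pos: "0 < rho k" for k
    by (rule penalty_pos[OF c rho0 step])
  have "KKT_P8_except_consensus Q q d (phiO k) (psiO k) (alphaO k)
      ((1 / rho k) *\<^sub>R (phiO k - psiO k) + lam k)" for k
    using psd pos step_i[of k] step_ii[of k] outer_iter[of k]
    by (rule KKT_P8_except_consensus_inner_limit_point)
  moreover have "(\<lambda>k. phiO k - psiO k) \<longlonglongrightarrow> 0"
    using c eta(2) rho0 outer_update mu_bounded by (rule consensus_gap_tendsto_zero)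
  ultimately show ?thesis
    using mu_bounded limpt by (rule KKT_P8_limit_point[OF psd])
qed

end
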